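(* Let $\beta>0$, $T\in(0,1)$, and let $\varphi:[0,T]\to\mathbb R$ be left-continuous with bounded variation and such that $\varphi(t)+1-t>0$ for every $t\in(0,T]$. Then $$\lim_{n\to\infty}\frac1{\beta'n^2}\log\mathbb E\exp\Big(\beta'n\sum_{k=1}^{\lfloor nT\rfloor}\varphi(k/n)\log\rho^{G,\beta}_{k,n}\Big)=\int_0^Tg^G(t,\varphi(t))\,dt,$$ where $g^G(t,\theta)=\mathcal J(1-t+\theta)-\mathcal J(1-t)-\mathcal J(1+\theta)$.
   Context: $\beta'=\beta/2$; $\rho^{G,\beta}_{1,n}:=1$, $\rho^{G,\beta}_{k,n}$ ($2\le k\le n$) independent, $\rho^{G,\beta}_{k,n}\sim\mathrm{Beta}(\beta'(n-k+1),\beta'(k-1))$. $\mathcal J(u)=u\log u-u+1$ ($u>0$), $\mathcal J(0)=1$. *)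

theory Defs
  imports "HOL-Probability.Probability"
begin

definition beta_density :: "real \<Rightarrow> real \<Rightarrow> real \<Rightarrow> real" where
  "beta_density a b x =
     (if 0 < x \<and> x < 1 then x powr (a - 1) * (1 - x) powr (b - 1) / Beta a b else 0)"

definition beta_measure :: "real \<Rightarrow> real \<Rightarrow> real measure" where
  "beta_measure a b = density lborel (\<lambda>x. ennreal (beta_density a b x))"

definition rhoG_space :: "real \<Rightarrow> nat \<Rightarrow> (nat \<Rightarrow> real) measure" where
  "rhoG_space \<beta> n = (\<Pi>\<^sub>M k\<in>{2..n}.
      beta_measure ((\<beta>/2) * real (n - k + 1)) ((\<beta>/2) * real (k - 1)))"

definition rhoG :: "nat \<Rightarrow> (nat \<Rightarrow> real) \<Rightarrow> real" where
  "rhoG k \<omega> = (if k = 1 then 1 else \<omega> k)"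

text \<open>J(u) = u log u - u + 1 for u > 0, J(0) = 1 (value for u < 0 is irrelevant; set to 1).\<close>
definition Jfun :: "real \<Rightarrow> real" where
  "Jfun u = (if u > 0 then u * ln u - u + 1 else 1)"

definition gG :: "real \<Rightarrow> real \<Rightarrow> real" where
  "gG t \<theta> = Jfun (1 - t + \<theta>) - Jfun (1 - t) - Jfun (1 + \<theta>)"

definition bounded_variation_on :: "(real \<Rightarrow> real) \<Rightarrow> real \<Rightarrow> real \<Rightarrow> bool" where
  "bounded_variation_on f a b \<longleftrightarrow>
     (\<exists>B. \<forall>(m::nat) (s::nat \<Rightarrow> real).
        a \<le> s 0 \<and> s m \<le> b \<and> (\<forall>i<m. s i \<le> s (Suc i)) \<longrightarrow>
        (\<Sum>i<m. \<bar>f (s (Suc i)) - f (s i)\<bar>) \<le> B)"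

end

(* The expectation factorises over the independent coordinates, and the Beta moment
   E rho^c = B(a + c, b) / B(a, b) turns the normalised log-moment into the Riemann-type sum
   (1/n) sum_k (beta' n)^-1 ln [B(beta'(n-k+1) + beta' n phi(k/n), beta'(k-1)) / B(beta'(n-k+1), beta'(k-1))].
   All four Gamma arguments of the k-th term are beta' n times numbers in [1/n, 2 + sup |phi|],
   so ln Gamma x = x ln x - x + O(1 + |ln x|) shows that the term is g^G(k/n, phi(k/n)) up to an
   error vanishing uniformly in k: the terms x ln x - x recombine into J, evaluated at points that
   are 1/n apart from those in g^G, which uniform continuity of J absorbs. Since phi is bounded and
   left-continuous, the left Riemann sums of t |-> g^G(t, phi(t)) converge to its integral by
   dominated convergence. *)

theory Submission
  imports Defs "HOL-Real_Asymp.Real_Asymp"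
begin

section \<open>Moments of products of Beta variables\<close>

lemma Beta_real_pos: "a > 0 \<Longrightarrow> b > 0 \<Longrightarrow> Beta a b > (0::real)"
  by (simp add: Beta_def)

lemma beta_density_measurable [measurable]: "beta_density a b \<in> borel_measurable borel"
  unfolding beta_density_def by measurable

lemma sets_beta_measure [measurable_cong, simp]: "sets (beta_measure a b) = sets borel"
  by (simp add: beta_measure_def)

lemma sigma_finite_beta_measure: "sigma_finite_measure (beta_measure a b)"
  unfolding beta_measure_def
  by (subst sigma_finite_measure.sigma_finite_iff_density_finite') (auto intro: sigma_finite_lborel)

lemma nn_integral_beta_measure_exp_ln:
  fixes a b c :: real
  assumes a: "a > 0" and b: "b > 0" and ac: "a + c > 0"
  shows "(\<integral>\<^sup>+x. ennreal (exp (c * ln x)) \<partial>beta_measure a b) = ennreal (Beta (a + c) b / Beta a b)"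
proof -
  have B: "Beta a b > 0" using a b by (rule Beta_real_pos)
  have "(\<integral>\<^sup>+x. ennreal (exp (c * ln x)) \<partial>beta_measure a b)
      = (\<integral>\<^sup>+x. ennreal (beta_density a b x) * ennreal (exp (c * ln x)) \<partial>lborel)"
    unfolding beta_measure_def by (subst nn_integral_density) auto
  also have "\<dots> = (\<integral>\<^sup>+x. ennreal (indicator {0..1} x * (x powr (a + c - 1) * (1 - x) powr (b - 1) / Beta a b)) \<partial>lborel)"
  proof (intro nn_integral_cong)
    fix x :: real
    have "x powr (a - 1) * exp (c * ln x) = x powr (a + c - 1)" if "x > 0"
      using that by (simp add: powr_def exp_add[symmetric] algebra_simps)
    then show "ennreal (beta_density a b x) * ennreal (exp (c * ln x)) =
      ennreal (indicator {0..1} x * (x powr (a + c - 1) * (1 - x) powr (b - 1) / Beta a b))"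
      using a b B by (auto simp: beta_density_def indicator_def ennreal_mult'[symmetric] field_simps)
  qed
  also have "\<dots> = ennreal (Beta (a + c) b / Beta a b)"
    using has_integral_Beta_real[OF ac b] B
    by (intro nn_integral_has_integral_lebesgue has_integral_divide) auto
  finally show ?thesis .
qed

lemma prob_space_beta_measure:
  assumes "a > 0" "b > 0"
  shows "prob_space (beta_measure a b)"
proof
  show "emeasure (beta_measure a b) (space (beta_measure a b)) = 1"
    using nn_integral_beta_measure_exp_ln[of a b 0] assms Beta_real_pos[OF assms] by simp
qed

lemma integral_PiM_beta_exp_sum_ln:
  fixes a b c :: "'i \<Rightarrow> real"
  assumes I: "finite I" and JI: "J \<subseteq> I"
    and ab: "\<And>k. k \<in> I \<Longrightarrow> a k > 0 \<and> b k > 0" and ac: "\<And>k. k \<in> J \<Longrightarrow> a k + c k > 0"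
  shows "(\<integral>\<omega>. exp (\<Sum>k\<in>J. c k * ln (\<omega> k)) \<partial>(\<Pi>\<^sub>M k\<in>I. beta_measure (a k) (b k)))
       = (\<Prod>k\<in>J. Beta (a k + c k) (b k) / Beta (a k) (b k))"
proof -
  interpret product_sigma_finite "\<lambda>k. beta_measure (a k) (b k)"
    by (simp add: product_sigma_finite_def sigma_finite_beta_measure)
  define f where "f k x = (if k \<in> J then exp (c k * ln x) else 1)" for k x
  have ratio_pos: "Beta (a k + c k) (b k) / Beta (a k) (b k) > 0" if "k \<in> J" for k
    using that JI ab ac by (intro divide_pos_pos Beta_real_pos) auto
  have exp_sum_eq_prod: "exp (\<Sum>k\<in>J. c k * ln (\<omega> k)) = (\<Prod>k\<in>I. f k (\<omega> k))" for \<omega> :: "'i \<Rightarrow> real"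
    using finite_subset[OF JI I] by (simp add: exp_sum f_def prod.If_cases I Int_absorb1[OF JI])
  have "(\<integral>\<^sup>+\<omega>. ennreal (\<Prod>k\<in>I. f k (\<omega> k)) \<partial>(\<Pi>\<^sub>M k\<in>I. beta_measure (a k) (b k)))
      = (\<integral>\<^sup>+\<omega>. (\<Prod>k\<in>I. ennreal (f k (\<omega> k))) \<partial>(\<Pi>\<^sub>M k\<in>I. beta_measure (a k) (b k)))"
    by (intro nn_integral_cong prod_ennreal[symmetric]) (auto simp: f_def)
  also have "\<dots> = (\<Prod>k\<in>I. \<integral>\<^sup>+x. ennreal (f k x) \<partial>beta_measure (a k) (b k))"
    by (rule product_nn_integral_prod) (auto simp: I f_def)
  also have "\<dots> = (\<Prod>k\<in>I. ennreal (if k \<in> J then Beta (a k + c k) (b k) / Beta (a k) (b k) else 1))"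
    using ab ac JI prob_space.emeasure_space_1[OF prob_space_beta_measure]
    by (intro prod.cong refl) (auto simp: f_def nn_integral_beta_measure_exp_ln)
  also have "\<dots> = ennreal (\<Prod>k\<in>J. Beta (a k + c k) (b k) / Beta (a k) (b k))"
    using ratio_pos by (subst prod_ennreal) (auto simp: less_imp_le prod.If_cases I Int_absorb1[OF JI])
  finally have "(\<integral>\<^sup>+\<omega>. ennreal (exp (\<Sum>k\<in>J. c k * ln (\<omega> k))) \<partial>(\<Pi>\<^sub>M k\<in>I. beta_measure (a k) (b k)))
      = ennreal (\<Prod>k\<in>J. Beta (a k + c k) (b k) / Beta (a k) (b k))"
    by (simp only: exp_sum_eq_prod)
  moreover have "(\<lambda>\<omega>. exp (\<Sum>k\<in>J. c k * ln (\<omega> k))) \<in> borel_measurable (\<Pi>\<^sub>M k\<in>I. beta_measure (a k) (b k))"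
    using JI by (measurable; auto)
  moreover have "(\<Prod>k\<in>J. Beta (a k + c k) (b k) / Beta (a k) (b k)) \<ge> 0"
    using ratio_pos by (auto intro: prod_nonneg less_imp_le)
  ultimately show ?thesis
    by (subst integral_eq_nn_integral) auto
qed

lemma integral_rhoG_space_exp_sum_ln:
  fixes \<beta> :: real and n m :: nat and c :: "nat \<Rightarrow> real"
  assumes \<beta>: "\<beta> > 0" and mn: "m < n"
    and pos: "\<And>k. k \<in> {2..m} \<Longrightarrow> (\<beta>/2) * real (n - k + 1) + c k > 0"
  shows "(\<integral>\<omega>. exp (\<Sum>k=1..m. c k * ln (rhoG k \<omega>)) \<partial>rhoG_space \<beta> n)
       = (\<Prod>k\<in>{2..m}. Beta ((\<beta>/2) * real (n - k + 1) + c k) ((\<beta>/2) * real (k - 1))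
                     / Beta ((\<beta>/2) * real (n - k + 1)) ((\<beta>/2) * real (k - 1)))"
proof -
  have "(\<Sum>k=1..m. c k * ln (rhoG k \<omega>)) = (\<Sum>k=2..m. c k * ln (\<omega> k))" for \<omega>
    by (rule sum.mono_neutral_cong_right) (auto simp: rhoG_def)
  then show ?thesis
    unfolding rhoG_space_def using \<beta> mn pos
    by (simp only:) (rule integral_PiM_beta_exp_sum_ln; auto)
qed

lemma nat_floor_mult_index_bounds:
  fixes T :: real and n k :: nat
  assumes T: "0 < T" "T < 1" and k: "k \<in> {1..nat \<lfloor>real n * T\<rfloor>}"
  shows "k < n" and "real k / real n \<in> {0<..T}"
proof -
  have "0 \<le> real n * T" using T by simp
  have "real k \<le> real (nat \<lfloor>real n * T\<rfloor>)"
    using k by (intro of_nat_mono) simp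
  also have "\<dots> \<le> real n * T"
    by (rule of_nat_floor) fact
  finally have "real k \<le> real n * T" .
  moreover have n: "0 < real n"
    using k calculation T by (auto intro: ccontr)
  moreover have "real n * T < real n" using n T by simp
  ultimately have "real k < real n" by linarith
  then show "k < n" by simp
  show "real k / real n \<in> {0<..T}"
    using \<open>real k \<le> real n * T\<close> n k by (auto simp: field_simps)
qed

lemma ln_moment_rhoG_eq_sum_ln_Beta_ratio:
  fixes \<beta> T :: real and \<phi> :: "real \<Rightarrow> real" and n :: nat
  assumes \<beta>: "\<beta> > 0" and T: "0 < T" "T < 1" and n: "n > 0"
    and pos: "\<And>t. t \<in> {0<..T} \<Longrightarrow> \<phi> t + 1 - t > 0"
  shows "1 / ((\<beta>/2) * (real n)\<^sup>2) *
      ln (\<integral>\<omega>. exp ((\<beta>/2) * real n * (\<Sum>k = 1..nat \<lfloor>real n * T\<rfloor>. \<phi> (real k / real n) * ln (rhoG k \<omega>)))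
        \<partial>rhoG_space \<beta> n)
    = (\<Sum>k = 2..nat \<lfloor>real n * T\<rfloor>.
        ln (Beta ((\<beta>/2) * real (n - k + 1) + (\<beta>/2) * real n * \<phi> (real k / real n)) ((\<beta>/2) * real (k - 1))
            / Beta ((\<beta>/2) * real (n - k + 1)) ((\<beta>/2) * real (k - 1))) / ((\<beta>/2) * real n) / real n)"
proof -
  define m where "m = nat \<lfloor>real n * T\<rfloor>"
  define c where "c k = (\<beta>/2) * real n * \<phi> (real k / real n)" for k
  define ratio where "ratio k = Beta ((\<beta>/2) * real (n - k + 1) + c k) ((\<beta>/2) * real (k - 1))
      / Beta ((\<beta>/2) * real (n - k + 1)) ((\<beta>/2) * real (k - 1))" for k
  have index: "k < n" "real k / real n \<in> {0<..T}" if "k \<in> {1..m}" for k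
    using nat_floor_mult_index_bounds[OF T] that unfolding m_def by blast+
  have m: "m < n"
    using index[of m] n by (cases "m = 0") auto
  have arg_pos: "(\<beta>/2) * real (n - k + 1) + c k > 0" if "k \<in> {2..m}" for k
  proof -
    have "0 < real n * (\<phi> (real k / real n) + 1 - real k / real n)"
      using pos index[of k] that n by simp
    then have "0 < real (n - k + 1) + real n * \<phi> (real k / real n)"
      using index[of k] that n by (simp add: of_nat_diff algebra_simps)
    then have "0 < (\<beta>/2) * (real (n - k + 1) + real n * \<phi> (real k / real n))"
      using \<beta> by simp
    then show ?thesis
      by (simp add: c_def algebra_simps)
  qed
  have ratio_pos: "ratio k > 0" if "k \<in> {2..m}" for k
    using arg_pos[OF that] that m \<beta> by (auto simp: ratio_def intro!: divide_pos_pos Beta_real_pos)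
  have "(\<integral>\<omega>. exp ((\<beta>/2) * real n * (\<Sum>k = 1..m. \<phi> (real k / real n) * ln (rhoG k \<omega>))) \<partial>rhoG_space \<beta> n)
      = (\<integral>\<omega>. exp (\<Sum>k = 1..m. c k * ln (rhoG k \<omega>)) \<partial>rhoG_space \<beta> n)"
    by (simp add: c_def sum_distrib_left mult.assoc)
  also have "\<dots> = (\<Prod>k\<in>{2..m}. ratio k)"
    unfolding ratio_def using \<beta> m arg_pos by (intro integral_rhoG_space_exp_sum_ln) auto
  finally have "ln (\<integral>\<omega>. exp ((\<beta>/2) * real n * (\<Sum>k = 1..m. \<phi> (real k / real n) * ln (rhoG k \<omega>)))
      \<partial>rhoG_space \<beta> n) = ln (\<Prod>k\<in>{2..m}. ratio k)"
    by simp
  also have "\<dots> = (\<Sum>k\<in>{2..m}. ln (ratio k))"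
    using ratio_pos by (intro ln_prod) (auto simp: less_imp_neq[symmetric])
  finally have "1 / ((\<beta>/2) * (real n)\<^sup>2) *
      ln (\<integral>\<omega>. exp ((\<beta>/2) * real n * (\<Sum>k = 1..m. \<phi> (real k / real n) * ln (rhoG k \<omega>))) \<partial>rhoG_space \<beta> n)
    = (\<Sum>k\<in>{2..m}. ln (ratio k)) / ((\<beta>/2) * real n) / real n"
    by (simp add: power2_eq_square field_simps)
  also have "\<dots> = (\<Sum>k\<in>{2..m}. ln (ratio k) / ((\<beta>/2) * real n) / real n)"
    by (simp only: sum_divide_distrib)
  finally show ?thesis
    unfolding m_def ratio_def c_def .
qed

section \<open>The Stirling remainder\<close>

definition stirling_remainder :: "real \<Rightarrow> real" where
  "stirling_remainder x = ln (Gamma x) - (x * ln x - x)"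

lemma xlnx_increment_bounds:
  fixes x :: real
  assumes x: "x > 0"
  shows "ln x \<le> (x + 1) * ln (x + 1) - x * ln x - 1"
    and "(x + 1) * ln (x + 1) - x * ln x - 1 \<le> ln (x + 1)"
proof -
  have "ln (x / (x + 1)) \<le> x / (x + 1) - 1" "ln ((x + 1) / x) \<le> (x + 1) / x - 1"
    using x by (intro ln_le_minus_one; simp)+
  then have lower: "1 / (x + 1) \<le> ln (x + 1) - ln x" and upper: "ln (x + 1) - ln x \<le> 1 / x"
    using x by (simp_all add: ln_div field_simps)
  have "1 \<le> (x + 1) * (ln (x + 1) - ln x)"
    using mult_left_mono[OF lower, of "x + 1"] x by simp
  then show "ln x \<le> (x + 1) * ln (x + 1) - x * ln x - 1"
    by (simp add: algebra_simps)
  have "x * (ln (x + 1) - ln x) \<le> 1"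
    using mult_left_mono[OF upper, of x] x by simp
  then show "(x + 1) * ln (x + 1) - x * ln x - 1 \<le> ln (x + 1)"
    by (simp add: algebra_simps)
qed

lemma stirling_remainder_plus1:
  fixes x :: real
  assumes x: "x > 0"
  shows "stirling_remainder (x + 1) \<le> stirling_remainder x"
    and "stirling_remainder x - (ln (x + 1) - ln x) \<le> stirling_remainder (x + 1)"
proof -
  have "Gamma (x + 1) = x * Gamma x"
    using x by (intro Gamma_plus1) (auto elim!: nonpos_Ints_cases)
  then have "ln (Gamma (x + 1)) = ln x + ln (Gamma x)"
    using x by (simp add: ln_mult_pos)
  then show "stirling_remainder (x + 1) \<le> stirling_remainder x"
    and "stirling_remainder x - (ln (x + 1) - ln x) \<le> stirling_remainder (x + 1)"
    using xlnx_increment_bounds[OF x] by (simp_all add: stirling_remainder_def algebra_simps)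
qed

lemma stirling_remainder_plus_nat:
  fixes y :: real
  assumes y: "y > 0"
  shows "stirling_remainder (y + real N) \<le> stirling_remainder y \<and>
    stirling_remainder y - (ln (y + real N) - ln y) \<le> stirling_remainder (y + real N)"
proof (induction N)
  case (Suc N)
  have pos: "y + real N > 0" using y by simp
  have "y + real (Suc N) = (y + real N) + 1" by simp
  then show ?case using stirling_remainder_plus1[OF pos] Suc by (simp only:) linarith
qed simp

lemma continuous_on_stirling_remainder: "continuous_on {0<..} stirling_remainder"
proof -
  have "continuous_on {0<..} (Gamma :: real \<Rightarrow> real)"
    by (intro continuous_on_Gamma) (auto elim!: nonpos_Ints_cases)
  then show ?thesis
    unfolding stirling_remainder_def [abs_def]
    by (intro continuous_intros) (auto dest: Gamma_real_pos)
qed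

lemma stirling_remainder_bound:
  fixes c :: real
  assumes c: "c > 0"
  obtains K where "\<And>x. x \<ge> c \<Longrightarrow> \<bar>stirling_remainder x\<bar> \<le> K + \<bar>ln x\<bar>"
proof -
  have "compact (stirling_remainder ` {min c 1..2})"
    using c by (intro compact_continuous_image compact_Icc
        continuous_on_subset[OF continuous_on_stirling_remainder]) auto
  then obtain K where K: "\<forall>y\<in>{min c 1..2}. \<bar>stirling_remainder y\<bar> \<le> K"
    by (auto dest!: compact_imp_bounded simp: bounded_iff)
  have "\<bar>stirling_remainder x\<bar> \<le> K + \<bar>ln x\<bar>" if x: "x \<ge> c" for x
  proof (cases "x \<le> 2")
    case True
    then have "\<bar>stirling_remainder x\<bar> \<le> K" using K x by auto
    then show ?thesis using abs_ge_zero[of "ln x"] by linarith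
  next
    case False
    define N where "N = nat (\<lfloor>x\<rfloor> - 1)"
    define y where "y = x - real N"
    have "\<lfloor>x\<rfloor> \<ge> 2" using False by (simp add: le_floor_iff)
    then have "real N = of_int \<lfloor>x\<rfloor> - 1" by (simp add: N_def)
    then have y: "1 \<le> y" "y \<le> 2"
      unfolding y_def by linarith+
    have "stirling_remainder x \<le> stirling_remainder y"
      "stirling_remainder y - (ln x - ln y) \<le> stirling_remainder x"
      using stirling_remainder_plus_nat[of y N] y by (auto simp: y_def)
    moreover have "0 \<le> ln y" "0 \<le> ln x" using y False by auto
    moreover have "y \<in> {min c 1..2}" using y by (auto simp: min_le_iff_disj)
    then have "\<bar>stirling_remainder y\<bar> \<le> K" using K by blast
    ultimately show ?thesis by (simp add: abs_le_iff)
  qed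
  then show ?thesis by (rule that)
qed

lemma stirling_remainder_small:
  fixes b C \<epsilon> :: real
  assumes b: "b > 0" and C: "C > 0" and \<epsilon>: "\<epsilon> > 0"
  shows "\<forall>\<^sub>F n in sequentially. \<forall>w\<in>{1 / real n..C}.
    \<bar>stirling_remainder (b * real n * w)\<bar> \<le> \<epsilon> * (b * real n)"
proof -
  obtain K where K: "\<And>x. x \<ge> b \<Longrightarrow> \<bar>stirling_remainder x\<bar> \<le> K + \<bar>ln x\<bar>"
    using stirling_remainder_bound[OF b] by blast
  have "(\<lambda>n. (K + \<bar>ln b\<bar> + ln (C * (b * real n))) / (b * real n)) \<longlonglongrightarrow> 0"
    using b C by real_asymp
  then have "\<forall>\<^sub>F n in sequentially. (K + \<bar>ln b\<bar> + ln (C * (b * real n))) / (b * real n) < \<epsilon>"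
    using \<epsilon> by (rule order_tendstoD)
  moreover have "\<forall>\<^sub>F n in sequentially. C * (b * real n) \<ge> 1"
    using b C by real_asymp
  moreover have "\<forall>\<^sub>F n in sequentially. n > 0"
    by (rule eventually_gt_at_top)
  ultimately show ?thesis
  proof eventually_elim
    case (elim n)
    then have l: "b * real n > 0" using b by simp
    show ?case
    proof
      fix w assume w: "w \<in> {1 / real n..C}"
      have x: "b \<le> b * real n * w" "b * real n * w \<le> C * (b * real n)"
        using mult_left_mono[of "1 / real n" w "b * real n"] mult_left_mono[of w C "b * real n"] w l elim
        by (auto simp: mult.commute)
      then have "ln b \<le> ln (b * real n * w)" "ln (b * real n * w) \<le> ln (C * (b * real n))"
        using b by (intro ln_le_cancel_iff[THEN iffD2]; linarith)+
      moreover have "0 \<le> ln (C * (b * real n))" using elim by simp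
      ultimately have "\<bar>ln (b * real n * w)\<bar> \<le> \<bar>ln b\<bar> + ln (C * (b * real n))"
        by linarith
      then show "\<bar>stirling_remainder (b * real n * w)\<bar> \<le> \<epsilon> * (b * real n)"
        using K[OF x(1)] elim l by (auto simp: field_simps)
    qed
  qed
qed

section \<open>Asymptotics of the Beta ratios\<close>

lemma isCont_Jfun: "isCont Jfun u"
proof -
  consider "u > 0" | "u < 0" | "u = 0" by linarith
  then show ?thesis
  proof cases
    case 1
    have "\<forall>\<^sub>F v in nhds u. Jfun v = v * ln v - v + 1"
      using eventually_nhds_in_open[of "{0<..}" u] 1 by (auto elim!: eventually_mono simp: Jfun_def)
    moreover have "isCont (\<lambda>v. v * ln v - v + 1) u" using 1 by (intro continuous_intros) auto
    ultimately show ?thesis by (subst isCont_cong) auto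
  next
    case 2
    have "\<forall>\<^sub>F v in nhds u. Jfun v = 1"
      using eventually_nhds_in_open[of "{..<0}" u] 2 by (auto elim!: eventually_mono simp: Jfun_def)
    then show ?thesis using isCont_cong[of Jfun "\<lambda>_. 1" u] by auto
  next
    case 3
    have "((\<lambda>v::real. v * ln v - v + 1) \<longlongrightarrow> 1) (at_right 0)" by real_asymp
    then have "(Jfun \<longlongrightarrow> 1) (at_right 0)"
      by (rule Lim_transform_eventually)
        (auto simp: Jfun_def intro: eventually_mono[OF eventually_at_right_less])
    moreover have "(Jfun \<longlongrightarrow> 1) (at_left 0)"
      by (rule Lim_transform_eventually[OF tendsto_const])
        (auto simp: Jfun_def intro: eventually_mono[OF eventually_at_left_real[of "-1" 0]])
    ultimately show ?thesis
      using 3 by (simp add: isCont_def Jfun_def filterlim_at_split)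
  qed
qed

lemma continuous_within_gG:
  assumes "continuous (at x within s) f" "continuous (at x within s) g"
  shows "continuous (at x within s) (\<lambda>y. gG (f y) (g y))"
  unfolding gG_def using assms
  by (intro continuous_intros continuous_within_compose3[OF isCont_Jfun])

lemma gG_bounded:
  obtains K where "\<And>t \<theta>. t \<in> {0..1} \<Longrightarrow> \<bar>\<theta>\<bar> \<le> M \<Longrightarrow> \<bar>gG t \<theta>\<bar> \<le> K"
proof -
  have "compact (Jfun ` {-(\<bar>M\<bar> + 2)..\<bar>M\<bar> + 2})"
    by (intro compact_continuous_image continuous_at_imp_continuous_on ballI isCont_Jfun compact_Icc)
  then obtain K where K: "\<forall>u\<in>{-(\<bar>M\<bar> + 2)..\<bar>M\<bar> + 2}. \<bar>Jfun u\<bar> \<le> K"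
    by (auto dest!: compact_imp_bounded simp: bounded_iff)
  have "\<bar>gG t \<theta>\<bar> \<le> 3 * K" if "t \<in> {0..1}" "\<bar>\<theta>\<bar> \<le> M" for t \<theta>
  proof -
    have "\<bar>Jfun (1 - t + \<theta>)\<bar> \<le> K" "\<bar>Jfun (1 - t)\<bar> \<le> K" "\<bar>Jfun (1 + \<theta>)\<bar> \<le> K"
      using that by (auto intro!: K[rule_format])
    then show ?thesis unfolding gG_def by linarith
  qed
  then show ?thesis by (rule that)
qed

lemma ln_Beta_ratio:
  fixes A A' B :: real
  assumes "A > 0" "A' > 0" "B > 0"
  shows "ln (Beta A B / Beta A' B) =
    ln (Gamma A) - ln (Gamma (A + B)) - ln (Gamma A') + ln (Gamma (A' + B))"
proof -
  have "Gamma A > 0" "Gamma A' > 0" "Gamma B > 0" "Gamma (A + B) > 0" "Gamma (A' + B) > 0"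
    using assms by simp_all
  then show ?thesis by (simp add: Beta_def ln_div ln_mult_pos)
qed

lemma ln_Gamma_scaled:
  fixes l w :: real
  assumes "l > 0" "w > 0"
  shows "ln (Gamma (l * w)) = l * w * ln l + l * (Jfun w - 1) + stirling_remainder (l * w)"
  using assms by (simp add: stirling_remainder_def Jfun_def ln_mult_pos algebra_simps)

text \<open>With \<open>l = b n\<close> and \<open>t = k/n\<close> the four Gamma arguments are \<open>l\<close> times
  \<open>1 - t + \<theta> + 1/n\<close>, \<open>1 + \<theta>\<close>, \<open>1 - t + 1/n\<close> and \<open>1\<close>, so the terms \<open>l ln l\<close> cancel.\<close>
lemma ln_Beta_ratio_expansion:
  fixes b \<theta> :: real and n k :: nat
  assumes b: "b > 0" and k: "2 \<le> k" "k < n" and pos: "1 - real k / real n + \<theta> > 0"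
  defines "l \<equiv> b * real n" and "t \<equiv> real k / real n"
  shows "ln (Beta (b * real (n - k + 1) + b * real n * \<theta>) (b * real (k - 1))
              / Beta (b * real (n - k + 1)) (b * real (k - 1))) / l - gG t \<theta>
       = (Jfun (1 - t + \<theta> + 1 / real n) - Jfun (1 - t + \<theta>))
         - (Jfun (1 - t + 1 / real n) - Jfun (1 - t))
         + (stirling_remainder (l * (1 - t + \<theta> + 1 / real n)) - stirling_remainder (l * (1 + \<theta>))
            - stirling_remainder (l * (1 - t + 1 / real n)) + stirling_remainder l) / l"
proof -
  have n: "real n > 0" using k by simp
  have t: "0 < t" "t < 1" using k n by (auto simp: t_def field_simps)
  define w1 where "w1 = 1 - t + \<theta> + 1 / real n"
  define w2 where "w2 = 1 + \<theta>"
  define w3 where "w3 = 1 - t + 1 / real n"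
  have "1 - t + \<theta> > 0" "1 / real n > 0" using pos n by (simp_all add: t_def)
  then have w: "w1 > 0" "w2 > 0" "w3 > 0" "1 - t + \<theta> > 0"
    using t unfolding w1_def w2_def w3_def by linarith+
  have l: "l > 0" using b n by (simp add: l_def)
  have nk: "real (n - k + 1) = real n - real k + 1" "real (k - 1) = real k - 1"
    using k by (simp_all add: of_nat_diff)
  have A': "b * real (n - k + 1) = l * w3"
    and A: "l * w3 + b * real n * \<theta> = l * w1"
    and AB: "l * w1 + b * real (k - 1) = l * w2"
    and A'B: "l * w3 + b * real (k - 1) = l"
    using n unfolding nk l_def t_def w1_def w2_def w3_def by (simp_all add: field_simps)
  have B: "b * real (k - 1) > 0" using b k by simp
  have "ln (Beta (b * real (n - k + 1) + b * real n * \<theta>) (b * real (k - 1))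
              / Beta (b * real (n - k + 1)) (b * real (k - 1)))
      = ln (Gamma (l * w1)) - ln (Gamma (l * w2)) - ln (Gamma (l * w3)) + ln (Gamma (l * 1))"
    using ln_Beta_ratio[OF mult_pos_pos[OF l w(1)] mult_pos_pos[OF l w(3)] B]
    unfolding A' A AB A'B mult_1_right .
  also have "\<dots> = l * ln l * (w1 - w2 - w3 + 1) + l * (Jfun w1 - Jfun w2 - Jfun w3 + Jfun 1)
      + (stirling_remainder (l * w1) - stirling_remainder (l * w2)
         - stirling_remainder (l * w3) + stirling_remainder (l * 1))"
    using l w ln_Gamma_scaled[OF l zero_less_one] by (simp add: ln_Gamma_scaled algebra_simps)
  also have "\<dots> = l * (Jfun w1 - Jfun w2 - Jfun w3)
      + (stirling_remainder (l * w1) - stirling_remainder (l * w2)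
         - stirling_remainder (l * w3) + stirling_remainder l)"
    by (simp add: w1_def w2_def w3_def Jfun_def)
  finally show ?thesis
    using w l by (simp add: gG_def w1_def w2_def w3_def field_simps)
qed

lemma Jfun_shift_small:
  fixes C \<epsilon> :: real
  assumes \<epsilon>: "\<epsilon> > 0"
  shows "\<forall>\<^sub>F n in sequentially. \<forall>x\<in>{0..C}. x + 1 / real n \<le> C \<longrightarrow> \<bar>Jfun (x + 1 / real n) - Jfun x\<bar> < \<epsilon>"
proof -
  have "uniformly_continuous_on {0..C} Jfun"
    by (intro compact_uniformly_continuous continuous_at_imp_continuous_on ballI isCont_Jfun) auto
  then obtain \<delta> where \<delta>: "\<delta> > 0" and close:
    "\<And>x x'. x \<in> {0..C} \<Longrightarrow> x' \<in> {0..C} \<Longrightarrow> \<bar>x' - x\<bar> < \<delta> \<Longrightarrow> \<bar>Jfun x' - Jfun x\<bar> < \<epsilon>"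
    unfolding uniformly_continuous_on_def dist_real_def using \<epsilon> by metis
  have "(\<lambda>n. 1 / real n) \<longlonglongrightarrow> 0" by real_asymp
  then have "\<forall>\<^sub>F n in sequentially. 1 / real n < \<delta>"
    using \<delta> by (rule order_tendstoD)
  then show ?thesis
    by eventually_elim (auto intro!: close)
qed

lemma ln_Beta_ratio_approx_gG:
  fixes b M \<epsilon> :: real
  assumes b: "b > 0" and M: "M \<ge> 0" and \<epsilon>: "\<epsilon> > 0"
  shows "\<forall>\<^sub>F n in sequentially. \<forall>k \<theta>. 2 \<le> k \<longrightarrow> k < n \<longrightarrow> \<bar>\<theta>\<bar> \<le> M \<longrightarrow> 1 - real k / real n + \<theta> > 0 \<longrightarrow>
     \<bar>ln (Beta (b * real (n - k + 1) + b * real n * \<theta>) (b * real (k - 1))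
          / Beta (b * real (n - k + 1)) (b * real (k - 1))) / (b * real n)
       - gG (real k / real n) \<theta>\<bar> \<le> \<epsilon>"
proof -
  have "2 + M > 0" "\<epsilon> / 16 > 0" "\<epsilon> / 4 > 0" using M \<epsilon> by auto
  from Jfun_shift_small[OF this(3), of "3 + M"] stirling_remainder_small[OF b this(1,2)]
    eventually_gt_at_top[of 0]
  show ?thesis
  proof eventually_elim
    case (elim n)
    then have n: "real n > 0" "0 < 1 / real n" "1 / real n \<le> 1" by auto
    define l where "l = b * real n"
    have l: "l > 0" using b n by (simp add: l_def)
    show ?case
    proof (intro allI impI)
      fix k \<theta> assume k: "2 \<le> k" "k < n" and \<theta>: "\<bar>\<theta>\<bar> \<le> M" and pos: "1 - real k / real n + \<theta> > 0"
      define t where "t = real k / real n"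
      have t: "0 < t" "t < 1" "1 - t + \<theta> > 0" "1 / real n \<le> t"
        using k n pos by (auto simp: t_def field_simps)
      have "1 - t + \<theta> \<in> {0..3 + M}" "1 - t + \<theta> + 1 / real n \<le> 3 + M"
        "1 - t \<in> {0..3 + M}" "1 - t + 1 / real n \<le> 3 + M"
        using \<theta> t M n unfolding atLeastAtMost_iff abs_le_iff by (intro conjI | linarith)+
      then have "\<bar>Jfun (1 - t + \<theta> + 1 / real n) - Jfun (1 - t + \<theta>)\<bar> < \<epsilon> / 4"
        "\<bar>Jfun (1 - t + 1 / real n) - Jfun (1 - t)\<bar> < \<epsilon> / 4"
        using elim by blast+
      moreover have "\<bar>(stirling_remainder (l * (1 - t + \<theta> + 1 / real n)) - stirling_remainder (l * (1 + \<theta>))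
          - stirling_remainder (l * (1 - t + 1 / real n)) + stirling_remainder l) / l\<bar> \<le> \<epsilon> / 4"
      proof -
        have R: "\<bar>stirling_remainder (l * w)\<bar> \<le> \<epsilon> / 16 * l" if "1 / real n \<le> w" "w \<le> 2 + M" for w
          using elim that unfolding l_def by auto
        have w: "1 / real n \<le> 1 - t + \<theta> + 1 / real n" "1 - t + \<theta> + 1 / real n \<le> 2 + M"
          "1 / real n \<le> 1 + \<theta>" "1 + \<theta> \<le> 2 + M"
          "1 / real n \<le> 1 - t + 1 / real n" "1 - t + 1 / real n \<le> 2 + M"
          "1 / real n \<le> 1" "1 \<le> 2 + M"
          using \<theta> t n M unfolding abs_le_iff by linarith+
        have "\<bar>stirling_remainder (l * (1 - t + \<theta> + 1 / real n)) - stirling_remainder (l * (1 + \<theta>))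
            - stirling_remainder (l * (1 - t + 1 / real n)) + stirling_remainder l\<bar> \<le> \<epsilon> / 4 * l"
          using R[OF w(1,2)] R[OF w(3,4)] R[OF w(5,6)] R[OF w(7,8)]
          unfolding abs_le_iff mult_1_right by linarith
        then show ?thesis using l by (simp add: field_simps)
      qed
      ultimately show "\<bar>ln (Beta (b * real (n - k + 1) + b * real n * \<theta>) (b * real (k - 1))
          / Beta (b * real (n - k + 1)) (b * real (k - 1))) / (b * real n)
       - gG (real k / real n) \<theta>\<bar> \<le> \<epsilon>"
        using ln_Beta_ratio_expansion[OF b k pos] unfolding l_def [symmetric] t_def [symmetric] by linarith
    qed
  qed
qed

lemma ln_Beta_ratio_approx_gG_on_grid:
  fixes \<beta> T M \<epsilon> :: real and \<phi> :: "real \<Rightarrow> real"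
  assumes \<beta>: "\<beta> > 0" and T: "0 < T" "T < 1" and \<epsilon>: "\<epsilon> > 0"
    and M: "\<And>t. t \<in> {0..T} \<Longrightarrow> \<bar>\<phi> t\<bar> \<le> M"
    and pos: "\<And>t. t \<in> {0<..T} \<Longrightarrow> \<phi> t + 1 - t > 0"
  shows "\<forall>\<^sub>F n in sequentially. \<forall>k\<in>{2..nat \<lfloor>real n * T\<rfloor>}.
    \<bar>ln (Beta ((\<beta>/2) * real (n - k + 1) + (\<beta>/2) * real n * \<phi> (real k / real n)) ((\<beta>/2) * real (k - 1))
        / Beta ((\<beta>/2) * real (n - k + 1)) ((\<beta>/2) * real (k - 1))) / ((\<beta>/2) * real n)
     - gG (real k / real n) (\<phi> (real k / real n))\<bar> \<le> \<epsilon>"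
proof -
  have "\<beta>/2 > 0" "M \<ge> 0" using \<beta> M[of T] T by auto
  from ln_Beta_ratio_approx_gG[OF this \<epsilon>] show ?thesis
  proof eventually_elim
    case (elim n)
    show ?case
    proof
      fix k assume k: "k \<in> {2..nat \<lfloor>real n * T\<rfloor>}"
      then have "k \<in> {1..nat \<lfloor>real n * T\<rfloor>}" by auto
      from nat_floor_mult_index_bounds[OF T this]
      have kn: "k < n" "real k / real n \<in> {0<..T}" .
      then have "\<bar>\<phi> (real k / real n)\<bar> \<le> M" "0 < 1 - real k / real n + \<phi> (real k / real n)"
        using M pos[of "real k / real n"] by auto
      with k kn show "\<bar>ln (Beta ((\<beta>/2) * real (n - k + 1) + (\<beta>/2) * real n * \<phi> (real k / real n)) ((\<beta>/2) * real (k - 1))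
          / Beta ((\<beta>/2) * real (n - k + 1)) ((\<beta>/2) * real (k - 1))) / ((\<beta>/2) * real n)
        - gG (real k / real n) (\<phi> (real k / real n))\<bar> \<le> \<epsilon>"
        by (intro elim[rule_format]) auto
    qed
  qed
qed

section \<open>Left Riemann sums\<close>

lemma indicator_atLeastLessThan_divide_eq_floor:
  fixes n k :: nat and t :: real
  assumes "n > 0"
  shows "indicator {real k / real n..<(real k + 1) / real n} t =
    (if \<lfloor>real n * t\<rfloor> = int k then 1 else (0::real))"
proof -
  have "t \<in> {real k / real n..<(real k + 1) / real n} \<longleftrightarrow> real k \<le> real n * t \<and> real n * t < real k + 1"
    using assms by (auto simp: field_simps)
  then show ?thesis by (simp add: indicator_def floor_eq_iff)
qed

lemma sum_step_function_eq:
  fixes n m :: nat and c :: "nat \<Rightarrow> real" and t :: real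
  assumes "n > 0"
  shows "(\<Sum>k=2..m. c k * indicator {real k / real n..<(real k + 1) / real n} t) =
    (if 2 \<le> \<lfloor>real n * t\<rfloor> \<and> \<lfloor>real n * t\<rfloor> \<le> int m then c (nat \<lfloor>real n * t\<rfloor>) else 0)"
proof -
  have "(\<Sum>k=2..m. c k * indicator {real k / real n..<(real k + 1) / real n} t) =
      (\<Sum>k\<in>{2..m}. if int k = \<lfloor>real n * t\<rfloor> then c k else 0)"
    by (intro sum.cong) (auto simp: indicator_atLeastLessThan_divide_eq_floor[OF assms])
  also have "\<dots> = (if 2 \<le> \<lfloor>real n * t\<rfloor> \<and> \<lfloor>real n * t\<rfloor> \<le> int m then c (nat \<lfloor>real n * t\<rfloor>) else 0)"
  proof (cases "0 \<le> \<lfloor>real n * t\<rfloor>")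
    case True
    then have "int k = \<lfloor>real n * t\<rfloor> \<longleftrightarrow> k = nat \<lfloor>real n * t\<rfloor>" for k by auto
    then show ?thesis using True by (auto simp: sum.delta' le_nat_iff nat_le_iff)
  next
    case False
    then have "int k \<noteq> \<lfloor>real n * t\<rfloor>" for k by linarith
    then have "(\<Sum>k = 2..m. if int k = \<lfloor>real n * t\<rfloor> then c k else 0) = 0"
      by (simp only: if_False sum.neutral_const)
    with False show ?thesis by auto
  qed
  finally show ?thesis .
qed

lemma integral_lborel_step_function:
  fixes n :: nat and c :: "nat \<Rightarrow> real" and A :: "nat set"
  assumes "finite A"
  shows "(\<integral>t. (\<Sum>k\<in>A. c k * indicator {real k / real n..<(real k + 1) / real n} t) \<partial>lborel) =
    (\<Sum>k\<in>A. c k / real n)"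
proof -
  have "measure lborel {real k / real n..<(real k + 1) / real n} = 1 / real n" for k
    by (cases "n = 0") (simp_all add: divide_right_mono measure_lborel_Ico add_divide_distrib)
  then have "(\<integral>t. c k * indicator {real k / real n..<(real k + 1) / real n} t \<partial>lborel) = c k / real n" for k
    by simp
  moreover have "integrable lborel (\<lambda>t. c k * indicator {real k / real n..<(real k + 1) / real n} t)" for k
  proof -
    have "real k / real n \<le> (real k + 1) / real n" by (simp add: divide_right_mono)
    then show ?thesis by (simp add: integrable_indicator_iff)
  qed
  ultimately show ?thesis
    using assms by (subst Bochner_Integration.integral_sum) auto
qed

lemma floor_mult_divide_tendsto: "(\<lambda>n. \<lfloor>real n * t\<rfloor> / real n) \<longlonglongrightarrow> t"
proof (rule tendsto_sandwich)
  have bounds: "t - 1 / real n \<le> \<lfloor>real n * t\<rfloor> / real n" "\<lfloor>real n * t\<rfloor> / real n \<le> t" if "n > 0" for n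
  proof -
    have "(real n * t - 1) / real n \<le> \<lfloor>real n * t\<rfloor> / real n" "\<lfloor>real n * t\<rfloor> / real n \<le> real n * t / real n"
      by (intro divide_right_mono; linarith)+
    then show "t - 1 / real n \<le> \<lfloor>real n * t\<rfloor> / real n" "\<lfloor>real n * t\<rfloor> / real n \<le> t"
      using that by (simp_all add: diff_divide_distrib)
  qed
  show "\<forall>\<^sub>F n in sequentially. t - 1 / real n \<le> \<lfloor>real n * t\<rfloor> / real n"
    by (intro eventually_mono[OF eventually_gt_at_top[of 0]] bounds(1))
  show "\<forall>\<^sub>F n in sequentially. \<lfloor>real n * t\<rfloor> / real n \<le> t"
    by (intro eventually_mono[OF eventually_gt_at_top[of 0]] bounds(2))
  show "(\<lambda>n. t - 1 / real n) \<longlonglongrightarrow> t" by real_asymp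
qed simp

lemma left_step_function_tendsto:
  fixes h :: "real \<Rightarrow> real" and T t :: real
  assumes lc: "\<And>s. s \<in> {0<..T} \<Longrightarrow> continuous (at_left s) h"
  shows "(\<lambda>n. if 2 \<le> \<lfloor>real n * t\<rfloor> \<and> \<lfloor>real n * t\<rfloor> \<le> \<lfloor>real n * T\<rfloor> then h (\<lfloor>real n * t\<rfloor> / real n) else 0)
    \<longlonglongrightarrow> indicator {0<..T} t * h t"
proof -
  consider "t \<le> 0" | "T < t" | "t \<in> {0<..T}" by fastforce
  then show ?thesis
  proof cases
    case 1
    have "\<lfloor>real n * t\<rfloor> \<le> 0" for n
    proof -
      have "real n * t \<le> 0" using 1 by (simp add: mult_nonneg_nonpos)
      then show ?thesis by simp
    qed
    then have "(if 2 \<le> \<lfloor>real n * t\<rfloor> \<and> \<lfloor>real n * t\<rfloor> \<le> \<lfloor>real n * T\<rfloor> then h (\<lfloor>real n * t\<rfloor> / real n) else 0) = 0"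
      for n by (smt (verit))
    then show ?thesis using 1 by simp
  next
    case 2
    have "filterlim (\<lambda>n. real n * (t - T)) at_top sequentially"
      using 2 by real_asymp
    then have "\<forall>\<^sub>F n in sequentially. real n * (t - T) > 1"
      by (simp add: filterlim_at_top_dense)
    then have "\<forall>\<^sub>F n in sequentially. \<lfloor>real n * T\<rfloor> < \<lfloor>real n * t\<rfloor>"
      by eventually_elim (simp add: algebra_simps, linarith)
    then show ?thesis
      using 2 by (auto intro: tendsto_eventually elim!: eventually_mono)
  next
    case 3
    have "filterlim (\<lambda>n. real n * t) at_top sequentially"
      using 3 by real_asymp
    then have "\<forall>\<^sub>F n in sequentially. real n * t \<ge> 2"
      by (simp add: filterlim_at_top)
    then have "\<forall>\<^sub>F n in sequentially.
        h (\<lfloor>real n * t\<rfloor> / real n) = (if 2 \<le> \<lfloor>real n * t\<rfloor> \<and> \<lfloor>real n * t\<rfloor> \<le> \<lfloor>real n * T\<rfloor> then h (\<lfloor>real n * t\<rfloor> / real n) else 0)"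
    proof eventually_elim
      case (elim n)
      have "\<lfloor>real n * t\<rfloor> \<le> \<lfloor>real n * T\<rfloor>"
        using 3 by (intro floor_mono mult_left_mono) auto
      then show ?case using elim by (simp add: le_floor_iff)
    qed
    moreover have "(\<lambda>n. h (\<lfloor>real n * t\<rfloor> / real n)) \<longlonglongrightarrow> h t"
    proof (rule continuous_within_tendsto_compose[OF _ _ floor_mult_divide_tendsto])
      show "continuous (at t within {..t}) h"
        using lc[OF 3] by (simp add: at_within_Iic_at_left)
      show "\<forall>\<^sub>F n in sequentially. \<lfloor>real n * t\<rfloor> / real n \<in> {..t}"
        using eventually_gt_at_top[of 0] by eventually_elim (simp add: field_simps)
    qed
    ultimately show ?thesis
      using 3 by (simp add: Lim_transform_eventually)
  qed
qed

lemma floor_grid_point_bounds: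
  fixes n :: nat and t T :: real
  assumes floor: "2 \<le> \<lfloor>real n * t\<rfloor>" "\<lfloor>real n * t\<rfloor> \<le> \<lfloor>real n * T\<rfloor>"
  shows "\<lfloor>real n * t\<rfloor> / real n \<in> {0<..T}" and "t \<in> {0..T + 1}"
proof -
  have n: "1 \<le> real n"
    using floor(1) by (cases n) auto
  have nt: "0 < real n * t" "real n * t < real n * T + 1" "\<lfloor>real n * t\<rfloor> \<le> real n * T"
    using floor by linarith+
  then show "\<lfloor>real n * t\<rfloor> / real n \<in> {0<..T}"
    using n floor(1) by (auto simp: field_simps)
  have "0 < t" using zero_less_mult_pos[OF nt(1)] n by simp
  moreover have "t < T + 1 / real n" using nt(2) n by (simp add: field_simps)
  moreover have "1 / real n \<le> 1" using n by simp
  ultimately show "t \<in> {0..T + 1}" by simp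
qed

lemma lborel_integral_indicator_Ioc_eq_integral:
  fixes h :: "real \<Rightarrow> real"
  assumes "integrable lborel (\<lambda>t. indicator {a<..b} t * h t)"
  shows "(\<integral>t. indicator {a<..b} t * h t \<partial>lborel) = integral {a..b} h"
proof -
  have "set_integrable lborel {a<..b} h"
    using assms by (simp add: set_integrable_def)
  then have "(LINT t:{a<..b}|lborel. h t) = integral {a<..b} h"
    by (rule set_borel_integral_eq_integral(2))
  then have "(\<integral>t. indicator {a<..b} t * h t \<partial>lborel) = integral {a<..b} h"
    by (simp add: set_lebesgue_integral_def)
  also have "\<dots> = integral {a..b} h"
    by (rule integral_spike_set[OF empty_imp_negligible negligible_subset[OF negligible_sing[of a]]]) auto
  finally show ?thesis .
qed

lemma left_Riemann_sum_tendsto_integral: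
  fixes h :: "real \<Rightarrow> real" and T C :: real
  assumes T: "T > 0" and bounded: "\<And>t. t \<in> {0<..T} \<Longrightarrow> \<bar>h t\<bar> \<le> C"
    and lc: "\<And>t. t \<in> {0<..T} \<Longrightarrow> continuous (at_left t) h"
  shows "(\<lambda>n. \<Sum>k=2..nat \<lfloor>real n * T\<rfloor>. h (real k / real n) / real n) \<longlonglongrightarrow> integral {0..T} h"
proof -
  define step where "step n t =
    (\<Sum>k=2..nat \<lfloor>real n * T\<rfloor>. h (real k / real n) * indicator {real k / real n..<(real k + 1) / real n} t)"
    for n :: nat and t :: real
  define f where "f t = indicator {0<..T} t * h t" for t
  have C: "C \<ge> 0" using bounded[of T] T by auto
  have step_eq: "step n t = (if 2 \<le> \<lfloor>real n * t\<rfloor> \<and> \<lfloor>real n * t\<rfloor> \<le> \<lfloor>real n * T\<rfloor>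
      then h (\<lfloor>real n * t\<rfloor> / real n) else 0)" if "n > 0" for n t
    unfolding step_def using T by (subst sum_step_function_eq[OF that]) auto
  have step_tendsto: "(\<lambda>n. step n t) \<longlonglongrightarrow> f t" for t
  proof (rule Lim_transform_eventually)
    show "(\<lambda>n. if 2 \<le> \<lfloor>real n * t\<rfloor> \<and> \<lfloor>real n * t\<rfloor> \<le> \<lfloor>real n * T\<rfloor>
        then h (\<lfloor>real n * t\<rfloor> / real n) else 0) \<longlonglongrightarrow> f t"
      unfolding f_def by (rule left_step_function_tendsto) (rule lc)
    show "\<forall>\<^sub>F n in sequentially. (if 2 \<le> \<lfloor>real n * t\<rfloor> \<and> \<lfloor>real n * t\<rfloor> \<le> \<lfloor>real n * T\<rfloor>
        then h (\<lfloor>real n * t\<rfloor> / real n) else 0) = step n t"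
      by (intro eventually_mono[OF eventually_gt_at_top[of 0]]) (simp add: step_eq)
  qed
  have step_bound: "\<bar>step n t\<bar> \<le> C * indicator {0..T + 1} t" for n t
  proof (cases "n > 0 \<and> 2 \<le> \<lfloor>real n * t\<rfloor> \<and> \<lfloor>real n * t\<rfloor> \<le> \<lfloor>real n * T\<rfloor>")
    case True
    then show ?thesis
      using floor_grid_point_bounds[of n t T] bounded by (simp add: step_eq)
  next
    case False
    then have "step n t = 0"
      by (cases "n = 0") (simp add: step_def, auto simp: step_eq)
    then show ?thesis using C by simp
  qed
  have step_integral: "integral\<^sup>L lborel (step n) = (\<Sum>k=2..nat \<lfloor>real n * T\<rfloor>. h (real k / real n) / real n)" for n
    unfolding step_def by (rule integral_lborel_step_function) simp
  have dominant: "integrable lborel (\<lambda>t. C * indicator {0..T + 1} t)"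
    using T by (simp add: integrable_indicator_iff)
  have [measurable]: "step n \<in> borel_measurable borel" for n
    unfolding step_def by measurable
  have f_meas: "f \<in> borel_measurable borel"
    by (rule borel_measurable_LIMSEQ_real[OF step_tendsto]) simp
  have "(\<lambda>n. integral\<^sup>L lborel (step n)) \<longlonglongrightarrow> integral\<^sup>L lborel f"
    using f_meas step_tendsto step_bound by (intro integral_dominated_convergence[OF _ _ dominant]) auto
  moreover have "integrable lborel f"
    using f_meas bounded C by (intro Bochner_Integration.integrable_bound[OF dominant])
      (auto simp: f_def indicator_def)
  then have "integral\<^sup>L lborel f = integral {0..T} h"
    unfolding f_def [abs_def] by (rule lborel_integral_indicator_Ioc_eq_integral)
  ultimately show ?thesis
    unfolding step_integral by simp
qed

lemma LIMSEQ_sum_divide_uniform_approx: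
  fixes f g :: "nat \<Rightarrow> nat \<Rightarrow> real" and A :: "nat \<Rightarrow> nat set"
  assumes lim: "(\<lambda>n. \<Sum>k\<in>A n. f n k / real n) \<longlonglongrightarrow> L"
    and close: "\<And>\<epsilon>. \<epsilon> > 0 \<Longrightarrow> \<forall>\<^sub>F n in sequentially. \<forall>k\<in>A n. \<bar>g n k - f n k\<bar> \<le> \<epsilon>"
    and card: "\<And>n. card (A n) \<le> n"
  shows "(\<lambda>n. \<Sum>k\<in>A n. g n k / real n) \<longlonglongrightarrow> L"
proof -
  have "(\<lambda>n. \<Sum>k\<in>A n. (g n k - f n k) / real n) \<longlonglongrightarrow> 0"
  proof (rule tendstoI)
    fix \<epsilon> :: real assume \<epsilon>: "\<epsilon> > 0"
    from close[OF half_gt_zero[OF \<epsilon>]]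
    show "\<forall>\<^sub>F n in sequentially. dist (\<Sum>k\<in>A n. (g n k - f n k) / real n) 0 < \<epsilon>"
    proof eventually_elim
      case (elim n)
      have "\<bar>\<Sum>k\<in>A n. (g n k - f n k) / real n\<bar> \<le> (\<Sum>k\<in>A n. \<bar>g n k - f n k\<bar>) / real n"
        by (simp add: sum_divide_distrib [symmetric] divide_right_mono sum_abs)
      also have "\<dots> \<le> real (card (A n)) * (\<epsilon> / 2) / real n"
        using elim sum_bounded_above[of "A n" "\<lambda>k. \<bar>g n k - f n k\<bar>" "\<epsilon> / 2"]
        by (intro divide_right_mono) auto
      also have "\<dots> \<le> \<epsilon> / 2"
        using card[of n] \<epsilon> by (cases "n = 0") (auto simp: field_simps)
      finally show ?case using \<epsilon> by simp
    qed
  qed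
  from tendsto_add[OF lim this] show ?thesis
    by (simp add: sum.distrib [symmetric] diff_divide_distrib)
qed

lemma bounded_variation_on_imp_bounded:
  assumes "bounded_variation_on f a b"
  obtains M where "\<And>t. t \<in> {a..b} \<Longrightarrow> \<bar>f t\<bar> \<le> M"
proof -
  obtain B where B: "\<And>(m::nat) s. a \<le> s 0 \<Longrightarrow> s m \<le> b \<Longrightarrow> (\<forall>i<m. s i \<le> s (Suc i)) \<Longrightarrow>
      (\<Sum>i<m. \<bar>f (s (Suc i)) - f (s i)\<bar>) \<le> B"
    using assms unfolding bounded_variation_on_def by blast
  have "\<bar>f t\<bar> \<le> \<bar>f b\<bar> + B" if "t \<in> {a..b}" for t
    using B[of "\<lambda>i. if i = 0 then t else b" 1] that by auto
  then show ?thesis by (rule that)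
qed

theorem lemma6p1:
  fixes \<beta> T :: real and \<phi> :: "real \<Rightarrow> real"
  assumes "\<beta> > 0" and "0 < T" and "T < 1"
    and "\<forall>t\<in>{0<..T}. continuous (at_left t) \<phi>"
    and "bounded_variation_on \<phi> 0 T"
    and "\<forall>t\<in>{0<..T}. \<phi> t + 1 - t > 0"
  shows "(\<lambda>n. 1 / ((\<beta>/2) * (real n)\<^sup>2) *
            ln (\<integral>\<omega>. exp ((\<beta>/2) * real n *
                  (\<Sum>k = 1..nat \<lfloor>real n * T\<rfloor>. \<phi> (real k / real n) * ln (rhoG k \<omega>)))
                \<partial>rhoG_space \<beta> n))
         \<longlonglongrightarrow> integral {0..T} (\<lambda>t. gG t (\<phi> t))"
proof -
  note \<beta> = assms(1) and T = assms(2,3) and pos = assms(6)[rule_format]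
  obtain M where M: "\<And>t. t \<in> {0..T} \<Longrightarrow> \<bar>\<phi> t\<bar> \<le> M"
    using bounded_variation_on_imp_bounded[OF assms(5)] by blast
  obtain K where K: "\<And>t \<theta>. t \<in> {0..1} \<Longrightarrow> \<bar>\<theta>\<bar> \<le> M \<Longrightarrow> \<bar>gG t \<theta>\<bar> \<le> K"
    using gG_bounded by blast
  have "(\<lambda>n. \<Sum>k=2..nat \<lfloor>real n * T\<rfloor>. gG (real k / real n) (\<phi> (real k / real n)) / real n)
      \<longlonglongrightarrow> integral {0..T} (\<lambda>t. gG t (\<phi> t))"
  proof (rule left_Riemann_sum_tendsto_integral[OF T(1)])
    fix t assume t: "t \<in> {0<..T}"
    show "\<bar>gG t (\<phi> t)\<bar> \<le> K" using t T M K by auto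
    show "continuous (at_left t) (\<lambda>t. gG t (\<phi> t))"
      using t assms(4) by (intro continuous_within_gG continuous_ident) auto
  qed
  moreover note ln_Beta_ratio_approx_gG_on_grid[OF \<beta> T _ M pos]
  moreover have "card {2..nat \<lfloor>real n * T\<rfloor>} \<le> n" for n
    using nat_floor_mult_index_bounds(1)[OF T, of "nat \<lfloor>real n * T\<rfloor>" n] by (cases "nat \<lfloor>real n * T\<rfloor>") auto
  ultimately have "(\<lambda>n. \<Sum>k=2..nat \<lfloor>real n * T\<rfloor>.
      ln (Beta ((\<beta>/2) * real (n - k + 1) + (\<beta>/2) * real n * \<phi> (real k / real n)) ((\<beta>/2) * real (k - 1))
          / Beta ((\<beta>/2) * real (n - k + 1)) ((\<beta>/2) * real (k - 1))) / ((\<beta>/2) * real n) / real n)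
      \<longlonglongrightarrow> integral {0..T} (\<lambda>t. gG t (\<phi> t))"
    by (rule LIMSEQ_sum_divide_uniform_approx)
  then show ?thesis
    by (rule Lim_transform_eventually)
      (intro eventually_mono[OF eventually_gt_at_top[of 0]] ln_moment_rhoG_eq_sum_ln_Beta_ratio[OF \<beta> T _ pos, symmetric])
qed

end
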